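(* Let $\boldsymbol\phi(n,m,\alpha,\beta,l)\in\mathbb C^N$ satisfy the condition equation set (for all arguments, only the indicated variable shifted) $\sigma_1\boldsymbol\phi(n-1,\cdot,l)=\boldsymbol\phi(n,\cdot,l)-\boldsymbol\phi(n-1,\cdot,l+1)$, $\sigma_2\boldsymbol\phi(m-1,\cdot,l)=\boldsymbol\phi(m,\cdot,l)-\boldsymbol\phi(m-1,\cdot,l+1)$, $\sigma_3\boldsymbol\phi(\alpha-1,\cdot,l)=\boldsymbol\phi(\alpha,\cdot,l)-\boldsymbol\phi(\alpha-1,\cdot,l+1)$, $\sigma_4\boldsymbol\phi(\beta-1,\cdot,l)=\boldsymbol\phi(\beta,\cdot,l)-\boldsymbol\phi(\beta-1,\cdot,l+1)$, and $\boldsymbol K\boldsymbol\phi(l)=\boldsymbol\phi(l+4)-\epsilon_1\boldsymbol\phi(l+3)+\epsilon_2\boldsymbol\phi(l+2)-\epsilon_3\boldsymbol\phi(l+1)$ for a constant $N\times N$ matrix $\boldsymbol K$. Let $f'=|0,\dots,N-1|$, $g'=|0,\dots,N-2,N|$ (Casoratians of $\boldsymbol\phi$). Then, writing $\sigma^-_{ij}=\sigma_i-\sigma_j$, $$\sigma^-_{13}\widetilde f'\dot{\check f}'-\sigma^-_{14}f'\widetilde{\dot{\check f}}'+\sigma^-_{34}\dot f'\widetilde{\check f}'=0,\qquad \sigma^-_{23}\widehat f'\dot{\check f}'-\sigma^-_{24}f'\widehat{\dot{\check f}}'+\sigma^-_{34}\dot f'\widehat{\check f}'=0,$$ $$f'(\sigma_3\widetilde{\check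 f}'+\widetilde{\check g}')+\sigma^-_{13}\widetilde f'\check f'-(\sigma_1f'+g')\widetilde{\check f}'=0,\qquad f'(\sigma_3\widehat{\check f}'+\widehat{\check g}')+\sigma^-_{23}\widehat f'\check f'-(\sigma_2f'+g')\widehat{\check f}'=0,$$ $$\widetilde f'(\sigma_1\dot f'+\dot g')-\sigma^-_{14}f'\widetilde{\dot f}'-(\sigma_4\widetilde f'+\widetilde g')\dot f'=0,\qquad \widehat f'(\sigma_2\dot f'+\dot g')-\sigma^-_{24}f'\widehat{\dot f}'-(\sigma_4\widehat f'+\widehat g')\dot f'=0,$$ $$\sigma^-_{14}\widetilde{\dot f}'\widehat f'-\sigma^-_{24}\widehat{\dot f}'\widetilde f'-\sigma^-_{12}\widehat{\widetilde f}'\dot f'=0,$$ $$(\sigma_3\check f'+\check g')\widehat{\widetilde{\dot f}}'-\check f'(\widehat{\widetilde{\dot g}}'-\sigma_4\widehat{\widetilde{\dot f}}')-\frac{R(\sigma_1,\sigma_4)}{\sigma^-_{12}\sigma^-_{13}}\widehat{\dot f}'\widetilde{\check f}'+\frac{R(\sigma_2,\sigma_4)}{\sigma^-_{12}\sigma^-_{23}}\widetilde{\dot f}'\widehat{\check f}'+(\sigma_1+\sigma_2+\epsilon_1)\check f'\widehat{\widetilde{\dot f}}'-\frac{R(\sigma_3,\sigma_4)}{\sigma^-_{13}\sigma^-_{23}}f'\widehat{\widetilde{\dot{\check f}}}'=0.$$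
   Context: Fix $\alpha_1,\alpha_2,\alpha_3,\delta\in\mathbb C$ and pairwise distinct $p,q,a,b\in\mathbb C$. Put $\sigma_1=p-\delta$, $\sigma_2=q-\delta$, $\sigma_3=a-\delta$, $\sigma_4=b-\delta$; $\epsilon_1=4\delta-\alpha_3$, $\epsilon_2=6\delta^2-3\delta\alpha_3+\alpha_2$, $\epsilon_3=4\delta^3-3\delta^2\alpha_3+2\delta\alpha_2-\alpha_1$; $R(x,y)=(x+y)(x^2+y^2)+\epsilon_1((x+y)^2-xy)+\epsilon_2(x+y)+\epsilon_3$. Casoratian notation: $|l_1,\dots,l_N|=\det(\boldsymbol\phi(l_1),\dots,\boldsymbol\phi(l_N))$ with $\boldsymbol\phi(l)=\boldsymbol\phi(n,m,\alpha,\beta,l)$; a run "$0,\dots,j$" with $j<0$ is empty. Shifts: $\widetilde F=F(n+1,m,\alpha,\beta)$, $\widehat F=F(n,m+1,\alpha,\beta)$, $\check F=F(n,m,\alpha-1,\beta)$, $\dot F=F(n,m,\alpha,\beta+1)$, composed as needed. *)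

theory Defs
  imports "Jordan_Normal_Form.Determinant"
begin

definition eps1 :: "complex \<Rightarrow> complex \<Rightarrow> complex" where
  "eps1 \<delta> a3 = 4*\<delta> - a3"

definition eps2 :: "complex \<Rightarrow> complex \<Rightarrow> complex \<Rightarrow> complex" where
  "eps2 \<delta> a2 a3 = 6*\<delta>^2 - 3*\<delta>*a3 + a2"

definition eps3 :: "complex \<Rightarrow> complex \<Rightarrow> complex \<Rightarrow> complex \<Rightarrow> complex" where
  "eps3 \<delta> a1 a2 a3 = 4*\<delta>^3 - 3*\<delta>^2*a3 + 2*\<delta>*a2 - a1"

definition Rpoly :: "complex \<Rightarrow> complex \<Rightarrow> complex \<Rightarrow> complex \<Rightarrow> complex \<Rightarrow> complex" where
  "Rpoly e1 e2 e3 x y = (x+y)*(x^2+y^2) + e1*((x+y)^2 - x*y) + e2*(x+y) + e3"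

definition casoratian :: "nat \<Rightarrow> (int \<Rightarrow> complex vec) \<Rightarrow> (nat \<Rightarrow> int) \<Rightarrow> complex" where
  "casoratian N v ls = det (mat N N (\<lambda>(i,j). v (ls j) $ i))"

definition fC :: "nat \<Rightarrow> (int \<Rightarrow> int \<Rightarrow> int \<Rightarrow> int \<Rightarrow> int \<Rightarrow> complex vec) \<Rightarrow> int \<Rightarrow> int \<Rightarrow> int \<Rightarrow> int \<Rightarrow> complex" where
  "fC N \<phi> n m al be = casoratian N (\<phi> n m al be) (\<lambda>j. int j)"

definition gC :: "nat \<Rightarrow> (int \<Rightarrow> int \<Rightarrow> int \<Rightarrow> int \<Rightarrow> int \<Rightarrow> complex vec) \<Rightarrow> int \<Rightarrow> int \<Rightarrow> int \<Rightarrow> int \<Rightarrow> complex" where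
  "gC N \<phi> n m al be = casoratian N (\<phi> n m al be) (\<lambda>j. if j = N - 1 then int N else int j)"

end

theory Submission
  imports Defs "Jordan_Normal_Form.Char_Poly"
begin

(* Put psi_k = phi(n, m, alpha - 1, beta, k) and let E be the shift psi_k -> psi_(k+1).
   The dispersion relations say that a unit step in the direction with parameter sigma applies
   E + sigma, so every Casoratian of the theorem is the determinant with columns
   F(E) E^j psi_0 (j < N) for a product F of linear factors X + sigma_i; the g-Casoratians
   replace the last column by F(E) E^N psi_0.  All eight identities are then bilinear relations
   between such determinants.  They follow from one master identity, obtained by expanding a
   product of two determinants by Cramer's rule (a Pluecker relation) after writing a polynomial
   u in the basis V, V/(X + v_i).  For the last identity u is the polynomial by which K acts,
   shifted by a constant c: K multiplies these Casoratians by det(K - c), which vanishes for only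
   finitely many c, and Lagrange interpolation at the -sigma_i produces the coefficients
   R(sigma_i, sigma_4) / prod (sigma_i - sigma_j). *)

abbreviation X :: "'a::comm_semiring_1 poly" where "X \<equiv> [:0, 1:]"

(* poly_shift psi q i is the i-th component of (q(E) psi)_0, where E is the shift
   psi_k -> psi_(k+1); shift_det N psi B is the determinant whose j-th column is (B j)(E) psi_0. *)

definition poly_shift :: "(nat \<Rightarrow> 'a::comm_ring_1 vec) \<Rightarrow> 'a poly \<Rightarrow> nat \<Rightarrow> 'a" where
  "poly_shift \<psi> q i = (\<Sum>k\<le>degree q. coeff q k * \<psi> k $ i)"

lemma poly_shift_altdef:
  assumes "degree q \<le> d"
  shows "poly_shift \<psi> q i = (\<Sum>k\<le>d. coeff q k * \<psi> k $ i)"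
  unfolding poly_shift_def
  by (rule sum.mono_neutral_left) (use assms in \<open>auto simp: coeff_eq_0\<close>)

lemma poly_shift_0 [simp]: "poly_shift \<psi> 0 i = 0"
  by (simp add: poly_shift_def)

lemma poly_shift_add: "poly_shift \<psi> (p + q) i = poly_shift \<psi> p i + poly_shift \<psi> q i"
proof -
  let ?d = "max (degree p) (degree q)"
  have "poly_shift \<psi> (p + q) i = (\<Sum>k\<le>?d. coeff (p + q) k * \<psi> k $ i)"
    by (rule poly_shift_altdef) (simp add: degree_add_le)
  also have "\<dots> = (\<Sum>k\<le>?d. coeff p k * \<psi> k $ i) + (\<Sum>k\<le>?d. coeff q k * \<psi> k $ i)"
    by (simp add: distrib_right sum.distrib)
  also have "\<dots> = poly_shift \<psi> p i + poly_shift \<psi> q i"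
    using poly_shift_altdef[of p ?d \<psi> i] poly_shift_altdef[of q ?d \<psi> i] by simp
  finally show ?thesis .
qed

lemma poly_shift_smult: "poly_shift \<psi> (smult c p) i = c * poly_shift \<psi> p i"
proof -
  have "poly_shift \<psi> (smult c p) i = (\<Sum>k\<le>degree p. coeff (smult c p) k * \<psi> k $ i)"
    by (rule poly_shift_altdef) (rule degree_smult_le)
  then show ?thesis by (simp add: poly_shift_def sum_distrib_left mult.assoc)
qed

lemma poly_shift_diff: "poly_shift \<psi> (p - q) i = poly_shift \<psi> p i - poly_shift \<psi> q i"
  using poly_shift_add[of \<psi> "p - q" q i] by simp

lemma poly_shift_sum: "poly_shift \<psi> (\<Sum>x\<in>A. f x) i = (\<Sum>x\<in>A. poly_shift \<psi> (f x) i)"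
  by (induction A rule: infinite_finite_induct) (auto simp: poly_shift_add)

lemma poly_shift_pCons:
  "poly_shift \<psi> (pCons a q) i = a * \<psi> 0 $ i + poly_shift (\<lambda>k. \<psi> (Suc k)) q i"
proof -
  have "poly_shift \<psi> (pCons a q) i = (\<Sum>k\<le>Suc (degree q). coeff (pCons a q) k * \<psi> k $ i)"
    by (rule poly_shift_altdef) (simp add: degree_pCons_le)
  also have "\<dots> = a * \<psi> 0 $ i + (\<Sum>k\<le>degree q. coeff q k * \<psi> (Suc k) $ i)"
    by (subst sum.atMost_Suc_shift) simp
  finally show ?thesis by (simp add: poly_shift_def)
qed

lemma poly_shift_X_power: "poly_shift \<psi> (X ^ l) i = \<psi> l $ i"
proof (induction l arbitrary: \<psi>)
  case (Suc l)
  have "(X :: 'a poly) ^ Suc l = pCons 0 (X ^ l)" by simp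
  then show ?case by (simp only: poly_shift_pCons Suc) simp
qed (simp add: poly_shift_def)

definition shift_mat :: "nat \<Rightarrow> (nat \<Rightarrow> 'a::comm_ring_1 vec) \<Rightarrow> (nat \<Rightarrow> 'a poly) \<Rightarrow> 'a mat" where
  "shift_mat N \<psi> B = mat N N (\<lambda>(i, j). poly_shift \<psi> (B j) i)"

definition shift_det :: "nat \<Rightarrow> (nat \<Rightarrow> 'a::comm_ring_1 vec) \<Rightarrow> (nat \<Rightarrow> 'a poly) \<Rightarrow> 'a" where
  "shift_det N \<psi> B = det (shift_mat N \<psi> B)"

lemma shift_mat_carrier [simp]: "shift_mat N \<psi> B \<in> carrier_mat N N"
  by (simp add: shift_mat_def)

lemma shift_mat_dims [simp]: "dim_row (shift_mat N \<psi> B) = N" "dim_col (shift_mat N \<psi> B) = N"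
  by (simp_all add: shift_mat_def)

lemma shift_det_dim_0 [simp]: "shift_det 0 \<psi> B = 1"
  unfolding shift_det_def by (rule det_dim_zero) simp

lemma shift_det_cong:
  assumes "\<And>j. j < N \<Longrightarrow> B j = B' j"
  shows "shift_det N \<psi> B = shift_det N \<psi> B'"
proof -
  have "shift_mat N \<psi> B = shift_mat N \<psi> B'"
    unfolding shift_mat_def by (rule eq_matI) (auto simp: assms)
  then show ?thesis by (simp add: shift_det_def)
qed

lemma cofactor_shift_mat_upd:
  "cofactor (shift_mat N \<psi> (B(k := p))) i k = cofactor (shift_mat N \<psi> B) i k"
proof -
  have "mat_delete (shift_mat N \<psi> (B(k := p))) i k = mat_delete (shift_mat N \<psi> B) i k"
    unfolding mat_delete_def by (rule eq_matI) (auto simp: shift_mat_def)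
  then show ?thesis by (simp add: cofactor_def)
qed

lemma shift_det_upd:
  assumes "k < N"
  shows "shift_det N \<psi> (B(k := p)) = (\<Sum>i<N. poly_shift \<psi> p i * cofactor (shift_mat N \<psi> B) i k)"
proof -
  have "shift_det N \<psi> (B(k := p)) = (\<Sum>i<N. shift_mat N \<psi> (B(k := p)) $$ (i, k)
          * cofactor (shift_mat N \<psi> (B(k := p))) i k)"
    unfolding shift_det_def by (rule laplace_expansion_column[OF shift_mat_carrier assms])
  also have "\<dots> = (\<Sum>i<N. poly_shift \<psi> p i * cofactor (shift_mat N \<psi> B) i k)"
    using assms by (simp only: cofactor_shift_mat_upd) (simp add: shift_mat_def)
  finally show ?thesis .
qed

lemma shift_det_upd_add:
  "k < N \<Longrightarrow> shift_det N \<psi> (B(k := p + q)) = shift_det N \<psi> (B(k := p)) + shift_det N \<psi> (B(k := q))"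
  by (simp add: shift_det_upd poly_shift_add distrib_right sum.distrib)

lemma shift_det_upd_smult:
  "k < N \<Longrightarrow> shift_det N \<psi> (B(k := smult c p)) = c * shift_det N \<psi> (B(k := p))"
  by (simp add: shift_det_upd poly_shift_smult sum_distrib_left mult.assoc)

lemma shift_det_upd_sum:
  "k < N \<Longrightarrow> shift_det N \<psi> (B(k := \<Sum>x\<in>A. f x)) = (\<Sum>x\<in>A. shift_det N \<psi> (B(k := f x)))"
  by (simp add: shift_det_upd poly_shift_sum sum_distrib_right sum.swap[of _ A])

lemma shift_det_identical_columns:
  assumes "j < N" "k < N" "j \<noteq> k" "B j = B k"
  shows "shift_det N \<psi> B = 0"
  unfolding shift_det_def
  by (rule det_identical_columns[OF shift_mat_carrier assms(3,1,2)])
    (rule eq_vecI, auto simp: shift_mat_def assms)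

lemma shift_det_upd_add_column:
  assumes "j < N" "k < N" "j \<noteq> k"
  shows "shift_det N \<psi> (B(k := B k + smult c (B j))) = shift_det N \<psi> B"
proof -
  have "shift_det N \<psi> (B(k := B j)) = 0"
    by (rule shift_det_identical_columns[of j N k]) (use assms in auto)
  then show ?thesis using assms by (simp add: shift_det_upd_add shift_det_upd_smult)
qed

lemma shift_det_swap:
  assumes "j < N" "k < N" "j \<noteq> k"
  shows "shift_det N \<psi> (B(j := p, k := q)) = - shift_det N \<psi> (B(j := q, k := p))"
proof -
  let ?D = "\<lambda>x y. shift_det N \<psi> (B(j := x, k := y))"
  have add1: "?D (x + y) z = ?D x z + ?D y z" for x y z
    using assms shift_det_upd_add[of j N \<psi> "B(k := z)" x y] by (simp add: fun_upd_twist)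
  have add2: "?D z (x + y) = ?D z x + ?D z y" for x y z
    using assms by (simp add: shift_det_upd_add)
  have diag: "?D x x = 0" for x
    by (rule shift_det_identical_columns[of j N k]) (use assms in auto)
  have "0 = ?D (p + q) (p + q)" by (simp only: diag)
  also have "\<dots> = ?D p p + ?D q p + (?D p q + ?D q q)" by (simp only: add1 add2)
  also have "\<dots> = ?D q p + ?D p q" by (simp only: diag add_0_left add_0_right)
  finally show ?thesis by (metis add.commute eq_neg_iff_add_eq_0)
qed

lemma shift_det_move_to_last:
  assumes "k < N"
  shows "shift_det N \<psi> (B(k := p))
    = (-1) ^ (N - 1 - k) * shift_det N \<psi> (\<lambda>j. if j < k then B j else if j < N - 1 then B (Suc j) else p)"
  using assms
proof (induction "N - 1 - k" arbitrary: k B)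
  case 0
  then show ?case by (simp, intro shift_det_cong) auto
next
  case (Suc d)
  then have k: "Suc k < N" "d = N - 1 - Suc k" by auto
  define B' where "B' = B(k := B (Suc k))"
  have "B(k := p) = B(k := p, Suc k := B (Suc k))" by auto
  then have "shift_det N \<psi> (B(k := p)) = - shift_det N \<psi> (B'(Suc k := p))"
    using shift_det_swap[of k N "Suc k" \<psi> B p "B (Suc k)"] k by (simp add: B'_def)
  also have "shift_det N \<psi> (B'(Suc k := p))
      = (-1) ^ d * shift_det N \<psi> (\<lambda>j. if j < Suc k then B' j else if j < N - 1 then B' (Suc j) else p)"
    using Suc.hyps(1)[of "Suc k" B'] k by simp
  also have "shift_det N \<psi> (\<lambda>j. if j < Suc k then B' j else if j < N - 1 then B' (Suc j) else p)
      = shift_det N \<psi> (\<lambda>j. if j < k then B j else if j < N - 1 then B (Suc j) else p)"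
    by (rule shift_det_cong) (use k in \<open>auto simp: B'_def less_Suc_eq\<close>)
  moreover have "(-1::'a) ^ (N - 1 - k) = - ((-1) ^ d)" using Suc.hyps(2)[symmetric] by simp
  ultimately show ?case by (simp only: mult_minus_left)
qed

lemma shift_det_consecutive_columns:
  "shift_det N \<psi> (\<lambda>j. smult z (B j) + B (Suc j))
    = (\<Sum>s\<le>N. z ^ s * shift_det N \<psi> (\<lambda>j. if j < s then B j else B (Suc j)))"
proof -
  define M where "M j = smult z (B j) + B (Suc j)" for j
  define Z where "Z m t = (\<lambda>j. if j < m then M j else if j < t then B j else B (Suc j))" for m t
  have below: "shift_det N \<psi> (Z m t) = z ^ m * shift_det N \<psi> (Z 0 t)" if "m < t" "t \<le> N" for m t
    using that
  proof (induction m)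
    case (Suc m)
    have "shift_det N \<psi> (Z (Suc m) t) = shift_det N \<psi> ((Z m t)(m := smult z (B m) + B (Suc m)))"
      by (rule shift_det_cong) (auto simp: Z_def M_def)
    also have "\<dots> = z * shift_det N \<psi> ((Z m t)(m := B m)) + shift_det N \<psi> ((Z m t)(m := B (Suc m)))"
      using Suc.prems by (simp add: shift_det_upd_add shift_det_upd_smult)
    also have "(Z m t)(m := B m) = Z m t" using Suc.prems by (auto simp: Z_def)
    also have "shift_det N \<psi> ((Z m t)(m := B (Suc m))) = 0"
      by (rule shift_det_identical_columns[of m N "Suc m"]) (use Suc.prems in \<open>auto simp: Z_def\<close>)
    finally show ?case using Suc by simp
  qed simp
  have diag: "shift_det N \<psi> (Z t t) = (\<Sum>s\<le>t. z ^ s * shift_det N \<psi> (Z 0 s))" if "t \<le> N" for t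
    using that
  proof (induction t)
    case (Suc t)
    have "shift_det N \<psi> (Z (Suc t) (Suc t)) = shift_det N \<psi> ((Z t t)(t := smult z (B t) + B (Suc t)))"
      by (rule shift_det_cong) (auto simp: Z_def M_def)
    also have "\<dots> = z * shift_det N \<psi> ((Z t t)(t := B t)) + shift_det N \<psi> ((Z t t)(t := B (Suc t)))"
      using Suc.prems by (simp add: shift_det_upd_add shift_det_upd_smult)
    also have "(Z t t)(t := B t) = Z t (Suc t)" by (auto simp: Z_def less_Suc_eq)
    also have "(Z t t)(t := B (Suc t)) = Z t t" by (auto simp: Z_def)
    also have "shift_det N \<psi> (Z t (Suc t)) = z ^ t * shift_det N \<psi> (Z 0 (Suc t))"
      using Suc.prems by (intro below) auto
    finally show ?case using Suc by (simp add: algebra_simps)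
  qed simp
  have "shift_det N \<psi> (\<lambda>j. smult z (B j) + B (Suc j)) = shift_det N \<psi> (Z N N)"
    by (rule shift_det_cong) (auto simp: Z_def M_def)
  also have "\<dots> = (\<Sum>s\<le>N. z ^ s * shift_det N \<psi> (Z 0 s))" by (rule diag) simp
  finally show ?thesis by (simp add: Z_def)
qed

lemma shift_det_cramer_comp:
  assumes i: "i < N"
  shows "shift_det N \<psi> B * poly_shift \<psi> x i
    = (\<Sum>k<N. shift_det N \<psi> (B(k := x)) * poly_shift \<psi> (B k) i)"
proof -
  let ?A = "shift_mat N \<psi> B"
  have adj: "(\<Sum>k<N. ?A $$ (i, k) * cofactor ?A j k) = (if i = j then det ?A else 0)"
    if j: "j < N" for j
  proof -
    have "(?A * adj_mat ?A) $$ (i, j) = (\<Sum>k<N. ?A $$ (i, k) * cofactor ?A j k)"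
      using i j by (simp add: adj_mat_def scalar_prod_def atLeast0LessThan)
    then show ?thesis using i j by (cases "i = j") (simp_all add: adj_mat(2)[OF shift_mat_carrier])
  qed
  have "(\<Sum>k<N. shift_det N \<psi> (B(k := x)) * poly_shift \<psi> (B k) i)
      = (\<Sum>k<N. \<Sum>j<N. poly_shift \<psi> x j * (?A $$ (i, k) * cofactor ?A j k))"
    using i by (simp add: shift_det_upd sum_distrib_left sum_distrib_right shift_mat_def mult_ac)
  also have "\<dots> = (\<Sum>j<N. \<Sum>k<N. poly_shift \<psi> x j * (?A $$ (i, k) * cofactor ?A j k))"
    by (rule sum.swap)
  also have "\<dots> = (\<Sum>j<N. poly_shift \<psi> x j * (if i = j then det ?A else 0))"
    by (simp add: adj sum_distrib_left[symmetric])
  also have "\<dots> = shift_det N \<psi> B * poly_shift \<psi> x i"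
    using i by (simp add: shift_det_def if_distrib mult.commute cong: if_cong)
  finally show ?thesis by simp
qed

lemma shift_det_cramer:
  assumes "0 < N"
  shows "shift_det N \<psi> B * shift_det N \<psi> (Y(N - 1 := x))
    = (\<Sum>k<N. shift_det N \<psi> (B(k := x)) * shift_det N \<psi> (Y(N - 1 := B k)))"
proof -
  let ?c = "\<lambda>i. cofactor (shift_mat N \<psi> Y) i (N - 1)"
  have "shift_det N \<psi> B * shift_det N \<psi> (Y(N - 1 := x))
      = (\<Sum>i<N. (shift_det N \<psi> B * poly_shift \<psi> x i) * ?c i)"
    using assms by (simp add: shift_det_upd sum_distrib_left mult.assoc)
  also have "\<dots> = (\<Sum>i<N. (\<Sum>k<N. shift_det N \<psi> (B(k := x)) * poly_shift \<psi> (B k) i) * ?c i)"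
    by (rule sum.cong[OF refl], subst shift_det_cramer_comp) auto
  also have "\<dots> = (\<Sum>i<N. \<Sum>k<N. shift_det N \<psi> (B(k := x)) * (poly_shift \<psi> (B k) i * ?c i))"
    by (simp only: sum_distrib_right mult.assoc)
  also have "\<dots> = (\<Sum>k<N. \<Sum>i<N. shift_det N \<psi> (B(k := x)) * (poly_shift \<psi> (B k) i * ?c i))"
    by (rule sum.swap)
  also have "\<dots> = (\<Sum>k<N. shift_det N \<psi> (B(k := x)) * (\<Sum>i<N. poly_shift \<psi> (B k) i * ?c i))"
    by (simp only: sum_distrib_left)
  also have "\<dots> = (\<Sum>k<N. shift_det N \<psi> (B(k := x)) * shift_det N \<psi> (Y(N - 1 := B k)))"
    using assms by (simp add: shift_det_upd)
  finally show ?thesis .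
qed

lemma linear_factor_mult: "[:v, 1:] * p = smult v p + X * p"
  by (simp add: mult_pCons_left)

lemma neg_one_power_split:
  assumes "s < N"
  shows "(-1 :: 'a::ring_1) ^ N = - ((-1) ^ (N - 1 - s) * (-1) ^ s)"
proof -
  obtain d where "N = Suc (s + d)" using less_imp_Suc_add[OF assms] by blast
  then show ?thesis by (simp add: power_add ac_simps)
qed

(* For psi_k = phi(n, m, alpha, beta, k) and F = 1 these are the Casoratians f' = |0,...,N-1| and
   g' = |0,...,N-2,N|; each factor X + sigma of F is a unit step in the lattice direction with
   parameter sigma. *)

definition cas_f :: "nat \<Rightarrow> (nat \<Rightarrow> 'a::comm_ring_1 vec) \<Rightarrow> 'a poly \<Rightarrow> 'a" where
  "cas_f N \<psi> F = shift_det N \<psi> (\<lambda>j. F * X ^ j)"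

definition cas_g :: "nat \<Rightarrow> (nat \<Rightarrow> 'a::comm_ring_1 vec) \<Rightarrow> 'a poly \<Rightarrow> 'a" where
  "cas_g N \<psi> F = shift_det N \<psi> (\<lambda>j. if j = N - 1 then F * X ^ N else F * X ^ j)"

definition cas_last :: "nat \<Rightarrow> (nat \<Rightarrow> 'a::comm_ring_1 vec) \<Rightarrow> 'a poly \<Rightarrow> 'a poly \<Rightarrow> 'a" where
  "cas_last N \<psi> V p = shift_det N \<psi> ((\<lambda>j. V * X ^ j)(N - 1 := p))"

definition cas_col :: "nat \<Rightarrow> (nat \<Rightarrow> 'a::comm_ring_1 vec) \<Rightarrow> 'a poly \<Rightarrow> nat \<Rightarrow> 'a" where
  "cas_col N \<psi> u k = shift_det N \<psi> ((\<lambda>j. u * X ^ j)(k := u * X ^ N))"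

lemma cas_last_add: "0 < N \<Longrightarrow> cas_last N \<psi> V (p + q) = cas_last N \<psi> V p + cas_last N \<psi> V q"
  by (simp add: cas_last_def shift_det_upd_add)

lemma cas_last_smult: "0 < N \<Longrightarrow> cas_last N \<psi> V (smult c p) = c * cas_last N \<psi> V p"
  by (simp add: cas_last_def shift_det_upd_smult)

lemma cas_last_sum:
  "0 < N \<Longrightarrow> cas_last N \<psi> V (\<Sum>x\<in>A. f x) = (\<Sum>x\<in>A. cas_last N \<psi> V (f x))"
  by (simp add: cas_last_def shift_det_upd_sum)

lemma cas_last_X_power:
  assumes "k < N"
  shows "cas_last N \<psi> V (V * X ^ k) = (if k = N - 1 then cas_f N \<psi> V else 0)"
proof (cases "k = N - 1")
  case True
  then show ?thesis unfolding cas_last_def cas_f_def by (simp, intro shift_det_cong) auto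
next
  case False
  then show ?thesis unfolding cas_last_def
    by (simp, intro shift_det_identical_columns[of k N "N - 1"]) (use assms in auto)
qed

lemma cas_last_X_power_N: "cas_last N \<psi> V (V * X ^ N) = cas_g N \<psi> V"
  unfolding cas_last_def cas_g_def by (rule shift_det_cong) auto

lemma cas_last_factor_X_power:
  assumes V: "V = [:v, 1:] * W" and N: "0 < N"
  shows "t \<le> N \<Longrightarrow> cas_last N \<psi> V (W * X ^ t)
    = (-v) ^ t * cas_last N \<psi> V W + (if t = N then cas_f N \<psi> V else 0)"
proof (induction t)
  case (Suc t)
  have "W * X ^ Suc t = V * X ^ t + smult (-v) (W * X ^ t)"
    unfolding V by (simp add: linear_factor_mult algebra_simps)
  then have "cas_last N \<psi> V (W * X ^ Suc t) = cas_last N \<psi> V (V * X ^ t) + (-v) * cas_last N \<psi> V (W * X ^ t)"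
    using N by (simp only: cas_last_add cas_last_smult)
  then show ?case using Suc N by (auto simp: cas_last_X_power)
qed (use N in simp)

lemma cas_f_factor_columns:
  assumes V: "V = [:v, 1:] * W" and N: "0 < N"
  shows "cas_f N \<psi> W = shift_det N \<psi> (\<lambda>j. if j = 0 then W else V * X ^ (j - 1))"
proof -
  define Q where "Q m = (\<lambda>j. if m \<le> j \<and> 0 < j then V * X ^ (j - 1) else W * X ^ j)" for m
  have step: "shift_det N \<psi> (Q m) = shift_det N \<psi> (Q (Suc m))" if m: "1 \<le> m" "m < N" for m
  proof -
    have "(X :: 'a poly) ^ m = X * X ^ (m - 1)" using m by (cases m) auto
    then have "V * X ^ (m - 1) = W * X ^ m + smult v (W * X ^ (m - 1))"
      unfolding V by (simp add: linear_factor_mult algebra_simps)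
    then have "shift_det N \<psi> (Q m) = shift_det N \<psi> ((Q (Suc m))(m := Q (Suc m) m + smult v (Q (Suc m) (m - 1))))"
      by (intro shift_det_cong) (use m in \<open>auto simp: Q_def\<close>)
    also have "\<dots> = shift_det N \<psi> (Q (Suc m))"
      by (rule shift_det_upd_add_column) (use m in auto)
    finally show ?thesis .
  qed
  have "shift_det N \<psi> (Q (N - d)) = shift_det N \<psi> (Q N)" if "d \<le> N - 1" for d
    using that
  proof (induction d)
    case (Suc d)
    then have "shift_det N \<psi> (Q (N - Suc d)) = shift_det N \<psi> (Q (Suc (N - Suc d)))" by (intro step) auto
    also have "Suc (N - Suc d) = N - d" using Suc.prems by auto
    finally show ?case using Suc by auto
  qed simp
  from this[of "N - 1"] have "shift_det N \<psi> (Q 1) = shift_det N \<psi> (Q N)" using N by simp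
  moreover have "shift_det N \<psi> (Q N) = cas_f N \<psi> W"
    unfolding cas_f_def by (rule shift_det_cong) (auto simp: Q_def)
  moreover have "shift_det N \<psi> (Q 1) = shift_det N \<psi> (\<lambda>j. if j = 0 then W else V * X ^ (j - 1))"
    by (rule shift_det_cong) (auto simp: Q_def)
  ultimately show ?thesis by simp
qed

lemma cas_last_factor:
  assumes V: "V = [:v, 1:] * W" and N: "0 < N"
  shows "cas_last N \<psi> V W = (-1) ^ (N - 1) * cas_f N \<psi> W"
proof -
  have "cas_f N \<psi> W = shift_det N \<psi> ((\<lambda>j. V * X ^ (j - 1))(0 := W))"
    unfolding cas_f_factor_columns[OF V N] by (rule shift_det_cong) auto
  also have "\<dots> = (-1) ^ (N - 1 - 0) * shift_det N \<psi>
      (\<lambda>j. if j < 0 then V * X ^ (j - 1) else if j < N - 1 then V * X ^ (Suc j - 1) else W)"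
    by (rule shift_det_move_to_last) (use N in auto)
  also have "shift_det N \<psi> (\<lambda>j. if j < 0 then V * X ^ (j - 1) else if j < N - 1 then V * X ^ (Suc j - 1) else W)
      = cas_last N \<psi> V W"
    unfolding cas_last_def by (rule shift_det_cong) auto
  finally show ?thesis by simp
qed

lemma cas_col_last: "cas_col N \<psi> u (N - 1) = cas_g N \<psi> u"
  unfolding cas_col_def cas_g_def by (rule shift_det_cong) auto

lemma cas_f_mult_linear:
  "(\<Sum>k<N. cas_col N \<psi> u k * (-z) ^ k) = (-z) ^ N * cas_f N \<psi> u - (-1) ^ N * cas_f N \<psi> (u * [:z, 1:])"
proof -
  define B where "B = (\<lambda>j. u * X ^ j)"
  define D where "D s = shift_det N \<psi> (\<lambda>j. if j < s then B j else B (Suc j))" for s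
  have col: "cas_col N \<psi> u k = (-1) ^ (N - 1 - k) * D k" if k: "k < N" for k
  proof -
    have "cas_col N \<psi> u k = (-1) ^ (N - 1 - k)
        * shift_det N \<psi> (\<lambda>j. if j < k then B j else if j < N - 1 then B (Suc j) else u * X ^ N)"
      unfolding cas_col_def B_def by (rule shift_det_move_to_last[OF k])
    also have "shift_det N \<psi> (\<lambda>j. if j < k then B j else if j < N - 1 then B (Suc j) else u * X ^ N) = D k"
      unfolding D_def
    proof (rule shift_det_cong)
      fix j assume "j < N"
      then have "\<not> j < N - 1 \<Longrightarrow> Suc j = N" by simp
      then show "(if j < k then B j else if j < N - 1 then B (Suc j) else u * X ^ N)
          = (if j < k then B j else B (Suc j))" by (auto simp: B_def)
    qed
    finally show ?thesis .
  qed
  have top: "D N = cas_f N \<psi> u"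
    unfolding D_def cas_f_def by (rule shift_det_cong) (simp add: B_def)
  have "cas_f N \<psi> (u * [:z, 1:]) = shift_det N \<psi> (\<lambda>j. smult z (B j) + B (Suc j))"
    unfolding cas_f_def B_def by (rule shift_det_cong) (simp add: linear_factor_mult algebra_simps)
  also have "\<dots> = (\<Sum>s\<le>N. z ^ s * D s)"
    unfolding D_def by (rule shift_det_consecutive_columns)
  finally have "(-1) ^ N * cas_f N \<psi> (u * [:z, 1:])
      = (-z) ^ N * cas_f N \<psi> u + (\<Sum>s<N. (-1) ^ N * (z ^ s * D s))"
    by (simp add: top lessThan_Suc_atMost[symmetric] distrib_left sum_distrib_left power_minus' mult_ac)
  also have "(\<Sum>s<N. (-1) ^ N * (z ^ s * D s)) = - (\<Sum>k<N. cas_col N \<psi> u k * (-z) ^ k)"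
    by (simp add: col neg_one_power_split[of _ N] power_minus' sum_negf[symmetric] mult_ac)
  finally show ?thesis by (simp add: algebra_simps)
qed

(* From here on products of linear factors are kept as products rather than expanded. *)

declare mult_pCons_left [simp del] mult_pCons_right [simp del]

lemma cas_cramer:
  assumes "0 < N"
  shows "cas_f N \<psi> u * cas_last N \<psi> V (u * X ^ N) = (\<Sum>k<N. cas_col N \<psi> u k * cas_last N \<psi> V (u * X ^ k))"
  using shift_det_cramer[OF assms, of \<psi> "\<lambda>j. u * X ^ j" "\<lambda>j. V * X ^ j" "u * X ^ N"]
  by (simp add: cas_f_def cas_last_def cas_col_def)

lemma cas_last_combination:
  assumes N: "0 < N" and V: "\<And>i. i \<in> I \<Longrightarrow> V = [:v i, 1:] * W i"
    and u: "u = smult h V + (\<Sum>i\<in>I. smult (lam i) (W i))" and t: "t \<le> N"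
  shows "cas_last N \<psi> V (u * X ^ t) = h * cas_last N \<psi> V (V * X ^ t)
    + (\<Sum>i\<in>I. lam i * ((-v i) ^ t * cas_last N \<psi> V (W i) + (if t = N then cas_f N \<psi> V else 0)))"
proof -
  have "u * X ^ t = smult h (V * X ^ t) + (\<Sum>i\<in>I. smult (lam i) (W i * X ^ t))"
    unfolding u by (simp add: distrib_right sum_distrib_right mult_smult_left)
  then have "cas_last N \<psi> V (u * X ^ t)
      = h * cas_last N \<psi> V (V * X ^ t) + (\<Sum>i\<in>I. lam i * cas_last N \<psi> V (W i * X ^ t))"
    using N by (simp add: cas_last_add cas_last_smult cas_last_sum)
  then show ?thesis
    using cas_last_factor_X_power[OF V N t] by simp
qed

(* With Phi = cas_last N psi V, expand cas_f N psi u * Phi (u X^N)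
   along the columns u X^k by Cramer's rule and evaluate Phi on u X^k = h V X^k + sum lam_i W_i X^k. *)

lemma cas_bilinear_identity:
  fixes I :: "'i set" and v lam :: "'i \<Rightarrow> 'a::comm_ring_1" and W :: "'i \<Rightarrow> 'a poly"
  assumes I: "finite I"
    and V: "\<And>i. i \<in> I \<Longrightarrow> V = [:v i, 1:] * W i"
    and u: "u = smult h V + (\<Sum>i\<in>I. smult (lam i) (W i))"
  shows "h * (cas_f N \<psi> u * cas_g N \<psi> V - cas_g N \<psi> u * cas_f N \<psi> V)
      + (\<Sum>i\<in>I. lam i) * cas_f N \<psi> u * cas_f N \<psi> V
      - (\<Sum>i\<in>I. lam i * cas_f N \<psi> (u * [:v i, 1:]) * cas_f N \<psi> (W i)) = 0"
proof (cases "N = 0")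
  case True
  then show ?thesis by (simp add: cas_f_def cas_g_def sum_distrib_right)
next
  case False
  then have N: "0 < N" by simp
  define C where "C = cas_f N \<psi>"
  define \<Phi> where "\<Phi> = cas_last N \<psi> V"
  define c where "c = cas_col N \<psi> u"
  define P where "P i = \<Phi> (W i)" for i
  have \<Phi>_below: "\<Phi> (u * X ^ k) = h * (if k = N - 1 then C V else 0) + (\<Sum>i\<in>I. lam i * P i * (-v i) ^ k)"
    if "k < N" for k
    using that cas_last_combination[OF N V u, of k \<psi>] by (simp add: \<Phi>_def P_def C_def cas_last_X_power mult_ac)
  have \<Phi>_top: "\<Phi> (u * X ^ N) = h * cas_g N \<psi> V + (\<Sum>i\<in>I. lam i * (-v i) ^ N * P i) + (\<Sum>i\<in>I. lam i) * C V"
    using cas_last_combination[OF N V u, of N \<psi>]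
    by (simp add: \<Phi>_def P_def C_def cas_last_X_power_N distrib_left sum.distrib sum_distrib_right mult.assoc)
  have P: "lam i * P i * ((-v i) ^ N * C u - (-1) ^ N * C (u * [:v i, 1:]))
      = lam i * (-v i) ^ N * P i * C u + lam i * C (u * [:v i, 1:]) * C (W i)" if "i \<in> I" for i
  proof -
    have "P i = (-1) ^ (N - 1) * C (W i)"
      using cas_last_factor[OF V[OF that] N] by (simp add: P_def \<Phi>_def C_def)
    moreover have "(-1 :: 'a) ^ N = - ((-1) ^ (N - 1))"
      using neg_one_power_split[of 0 N] N by simp
    ultimately have "P i * (-1) ^ N = - ((-1) ^ (N - 1) * (-1) ^ (N - 1) * C (W i))"
      by (simp only: mult_minus_right mult_minus_left mult_ac)
    then have "P i * (-1) ^ N = - C (W i)" by simp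
    moreover have "lam i * P i * ((-v i) ^ N * C u - (-1) ^ N * C (u * [:v i, 1:]))
        = lam i * (-v i) ^ N * P i * C u - lam i * C (u * [:v i, 1:]) * (P i * (-1) ^ N)"
      by (simp add: algebra_simps)
    ultimately show ?thesis by simp
  qed
  have "C u * \<Phi> (u * X ^ N) = (\<Sum>k<N. c k * \<Phi> (u * X ^ k))"
    using N by (simp add: cas_cramer C_def \<Phi>_def c_def)
  also have "\<dots> = h * (\<Sum>k<N. c k * (if k = N - 1 then C V else 0))
      + (\<Sum>k<N. \<Sum>i\<in>I. lam i * P i * (c k * (-v i) ^ k))"
    by (simp add: \<Phi>_below distrib_left sum.distrib sum_distrib_left mult_ac)
  also have "(\<Sum>k<N. c k * (if k = N - 1 then C V else 0)) = cas_g N \<psi> u * C V"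
    using N cas_col_last[of N \<psi> u] by (simp add: c_def if_distrib cong: if_cong)
  also have "(\<Sum>k<N. \<Sum>i\<in>I. lam i * P i * (c k * (-v i) ^ k))
      = (\<Sum>i\<in>I. lam i * P i * (\<Sum>k<N. c k * (-v i) ^ k))"
    by (subst sum.swap) (simp add: sum_distrib_left)
  also have "\<dots> = (\<Sum>i\<in>I. lam i * P i * ((-v i) ^ N * C u - (-1) ^ N * C (u * [:v i, 1:])))"
    by (simp only: c_def C_def cas_f_mult_linear)
  also have "\<dots> = (\<Sum>i\<in>I. lam i * (-v i) ^ N * P i) * C u + (\<Sum>i\<in>I. lam i * C (u * [:v i, 1:]) * C (W i))"
    by (simp add: P sum.distrib sum_distrib_right)
  finally show ?thesis
    by (simp add: \<Phi>_top C_def algebra_simps)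
qed

lemma cas_f_g_identity:
  "cas_f N \<psi> (H * [:a, 1:]) * cas_g N \<psi> (H * [:c, 1:]) - cas_g N \<psi> (H * [:a, 1:]) * cas_f N \<psi> (H * [:c, 1:])
   + (a - c) * cas_f N \<psi> (H * [:a, 1:]) * cas_f N \<psi> (H * [:c, 1:])
   - (a - c) * cas_f N \<psi> (H * [:a, 1:] * [:c, 1:]) * cas_f N \<psi> H = 0"
proof -
  have "[:a, 1:] = [:c, 1:] + [:a - c:]" by simp
  then have "H * [:a, 1:] = H * [:c, 1:] + H * [:a - c:]" by (metis distrib_left)
  then have "H * [:a, 1:] = smult 1 (H * [:c, 1:]) + (\<Sum>i\<in>{()}. smult (a - c) H)"
    by (simp add: mult.commute mult_pCons_right)
  from cas_bilinear_identity[of "{()}" "H * [:c, 1:]" "\<lambda>_. c" "\<lambda>_. H", OF _ _ this]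
  show ?thesis by (simp add: mult_ac)
qed

lemma cas_hirota_miwa:
  fixes a b c :: "'a::field"
  shows "(b - c) * cas_f N \<psi> (H * [:a, 1:]) * cas_f N \<psi> (H * [:b, 1:] * [:c, 1:])
       + (c - a) * cas_f N \<psi> (H * [:b, 1:]) * cas_f N \<psi> (H * [:c, 1:] * [:a, 1:])
       + (a - b) * cas_f N \<psi> (H * [:c, 1:]) * cas_f N \<psi> (H * [:a, 1:] * [:b, 1:]) = 0"
    (is "?lhs = 0")
proof (cases "b = c")
  case True
  then show ?thesis by (simp add: algebra_simps)
next
  case False
  then have cb: "c - b \<noteq> 0" by simp
  let ?\<tau> = "\<lambda>F. cas_f N \<psi> (H * F)"
  define W where "W i = (if i = b then H * [:c, 1:] else H * [:b, 1:])" for i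
  define l1 l2 where "l1 = (a - b) / (c - b)" and "l2 = (c - a) / (c - b)"
  define lam where "lam i = (if i = b then l1 else l2)" for i
  have V: "H * [:b, 1:] * [:c, 1:] = [:i, 1:] * W i" if "i \<in> {b, c}" for i
    using that by (auto simp: W_def mult_ac)
  have "l1 * c + l2 * b = ((a - b) * c + (c - a) * b) / (c - b)" "l1 + l2 = ((a - b) + (c - a)) / (c - b)"
    by (simp_all only: l1_def l2_def add_divide_distrib times_divide_eq_left)
  moreover have "(a - b) * c + (c - a) * b = a * (c - b)" "(a - b) + (c - a) = c - b"
    by (simp_all add: algebra_simps)
  ultimately have coeffs: "l1 * c + l2 * b = a" "l1 + l2 = 1"
    using cb by simp_all
  then have "smult (lam b) [:c, 1:] + smult (lam c) [:b, 1:] = [:a, 1:]"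
    using False by (simp add: lam_def)
  then have "H * [:a, 1:] = smult (lam b) (H * [:c, 1:]) + smult (lam c) (H * [:b, 1:])"
    by (metis distrib_left mult_smult_right)
  then have "H * [:a, 1:] = smult 0 (H * [:b, 1:] * [:c, 1:]) + (\<Sum>i\<in>{b, c}. smult (lam i) (W i))"
    using False by (simp add: W_def)
  from cas_bilinear_identity[of "{b, c}", OF _ V this]
  have master: "?\<tau> [:a, 1:] * ?\<tau> ([:b, 1:] * [:c, 1:]) - l1 * ?\<tau> ([:a, 1:] * [:b, 1:]) * ?\<tau> [:c, 1:]
      - l2 * ?\<tau> ([:a, 1:] * [:c, 1:]) * ?\<tau> [:b, 1:] = 0"
    using False coeffs(2) by (simp add: lam_def W_def algebra_simps)
  have l: "(c - b) * l1 = a - b" "(c - b) * l2 = c - a"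
    using cb by (simp_all add: l1_def l2_def)
  have "?lhs = (b - c) * ?\<tau> [:a, 1:] * ?\<tau> ([:b, 1:] * [:c, 1:])
      + (a - b) * ?\<tau> ([:a, 1:] * [:b, 1:]) * ?\<tau> [:c, 1:] + (c - a) * ?\<tau> ([:a, 1:] * [:c, 1:]) * ?\<tau> [:b, 1:]"
    by (simp add: algebra_simps)
  also have "\<dots> = (b - c) * ?\<tau> [:a, 1:] * ?\<tau> ([:b, 1:] * [:c, 1:])
      + ((c - b) * l1) * ?\<tau> ([:a, 1:] * [:b, 1:]) * ?\<tau> [:c, 1:]
      + ((c - b) * l2) * ?\<tau> ([:a, 1:] * [:c, 1:]) * ?\<tau> [:b, 1:]"
    by (simp only: l)
  also have "\<dots> = - (c - b) * (?\<tau> [:a, 1:] * ?\<tau> ([:b, 1:] * [:c, 1:])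
      - l1 * ?\<tau> ([:a, 1:] * [:b, 1:]) * ?\<tau> [:c, 1:] - l2 * ?\<tau> ([:a, 1:] * [:c, 1:]) * ?\<tau> [:b, 1:])"
    by (simp add: algebra_simps)
  finally show ?thesis by (simp only: master mult_zero_right)
qed

definition lin_prod :: "'a::comm_semiring_1 set \<Rightarrow> 'a poly" where
  "lin_prod S = (\<Prod>s\<in>S. [:s, 1:])"

lemma lin_prod_remove: "finite S \<Longrightarrow> s \<in> S \<Longrightarrow> lin_prod S = [:s, 1:] * lin_prod (S - {s})"
  unfolding lin_prod_def by (rule prod.remove)

lemma degree_lin_prod: "finite S \<Longrightarrow> degree (lin_prod (S :: 'a::idom set)) = card S"
  unfolding lin_prod_def by (simp add: degree_prod_sum_eq)

lemma coeff_lin_prod_card: "finite S \<Longrightarrow> coeff (lin_prod (S :: 'a::idom set)) (card S) = 1"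
  using lead_coeff_prod[of "\<lambda>s. [:s, 1:]" S] by (simp add: degree_lin_prod flip: lin_prod_def)

lemma poly_lin_prod: "poly (lin_prod S) x = (\<Prod>s\<in>S. s + x)"
  by (simp add: lin_prod_def poly_prod)

lemma coeff_lin_prod_pred:
  assumes "finite S" "S \<noteq> {}"
  shows "coeff (lin_prod (S :: 'a::idom set)) (card S - 1) = \<Sum>S"
  using assms
proof (induction S rule: finite_ne_induct)
  case (insert s S)
  obtain k where k: "card S = Suc k" using insert by (metis card_gt_0_iff gr0_implies_Suc)
  have "lin_prod (insert s S) = smult s (lin_prod S) + pCons 0 (lin_prod S)"
    using insert by (simp add: lin_prod_def mult_pCons_left)
  then show ?case using insert k coeff_lin_prod_card[of S] by simp
qed (simp add: lin_prod_def)

lemma lagrange_lin_prod: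
  fixes p :: "'a::field poly"
  assumes S: "finite S" and deg: "degree p \<le> card S" and lead: "coeff p (card S) = 1"
  shows "p = lin_prod S + (\<Sum>s\<in>S. smult (poly p (-s) / poly (lin_prod (S - {s})) (-s)) (lin_prod (S - {s})))"
    (is "p = ?V + ?L")
proof (rule poly_eqI_degree_lead_coeff[where n = "card S" and A = "uminus ` S"])
  let ?W = "\<lambda>s. lin_prod (S - {s})"
  have deg_W: "degree (?W s) < card S" if "s \<in> S" for s
    using card_Diff1_less[OF S that] S by (simp add: degree_lin_prod)
  have "coeff ?L (card S) = 0"
    by (simp add: coeff_sum deg_W coeff_eq_0)
  then show "coeff p (card S) = coeff (?V + ?L) (card S)"
    using lead S by (simp add: coeff_lin_prod_card)
  show "card S \<le> card (uminus ` S)"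
    by (simp add: card_image)
  show "degree p \<le> card S" by (rule deg)
  have "degree ?L \<le> card S"
    by (rule degree_sum_le) (use S deg_W degree_smult_le in \<open>auto intro: order.trans less_imp_le\<close>)
  then show "degree (?V + ?L) \<le> card S"
    using S by (intro degree_add_le) (simp_all add: degree_lin_prod)
  fix z assume "z \<in> uminus ` S"
  then obtain s where s: "s \<in> S" and z: "z = -s" by auto
  have W_other: "poly (?W t) (-s) = 0" if "t \<in> S" "t \<noteq> s" for t
    using S s that lin_prod_remove[of "S - {t}" s] by simp
  have W_self: "poly (?W s) (-s) \<noteq> 0"
    using S by (simp add: poly_lin_prod)
  have "poly ?L (-s) = (\<Sum>t\<in>S. if t = s then poly p (-s) / poly (?W s) (-s) * poly (?W s) (-s) else 0)"
    by (auto simp: poly_sum W_other intro: sum.cong)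
  also have "\<dots> = poly p (-s)"
    using S s W_self by simp
  finally show "poly p z = poly (?V + ?L) z"
    using S s z lin_prod_remove[of S s] by simp
qed

lemma lagrange_lin_prod_coeff_sum:
  fixes p :: "'a::field poly"
  assumes S: "finite S" "S \<noteq> {}" and deg: "degree p \<le> card S" and lead: "coeff p (card S) = 1"
  shows "(\<Sum>s\<in>S. poly p (-s) / poly (lin_prod (S - {s})) (-s)) = coeff p (card S - 1) - \<Sum>S"
proof -
  have W: "coeff (lin_prod (S - {s})) (card S - 1) = 1" if "s \<in> S" for s
    using coeff_lin_prod_card[of "S - {s}"] S that by simp
  from arg_cong[where f = "\<lambda>q. coeff q (card S - 1)", OF lagrange_lin_prod[OF S(1) deg lead]]
  show ?thesis
    using S W coeff_lin_prod_pred[OF S] by (simp add: coeff_sum)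
qed

lemma poly_shift_mult_char:
  fixes K :: "'a::comm_ring_1 mat"
  assumes K: "K \<in> carrier_mat N N" and i: "i < N"
  shows "(\<And>l. dim_vec (\<psi> l) = N) \<Longrightarrow>
    (\<And>l i. i < N \<Longrightarrow> (K *\<^sub>v \<psi> l) $ i = poly_shift (\<lambda>k. \<psi> (l + k)) P i) \<Longrightarrow>
    (\<Sum>j<N. K $$ (i, j) * poly_shift \<psi> q j) = poly_shift \<psi> (P * q) i"
proof (induction q arbitrary: \<psi> rule: pCons_induct)
  case (pCons a q)
  let ?\<psi>' = "\<lambda>k. \<psi> (Suc k)"
  have IH: "(\<Sum>j<N. K $$ (i, j) * poly_shift ?\<psi>' q j) = poly_shift ?\<psi>' (P * q) i"
    by (rule pCons.IH) (use pCons.prems in auto)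
  have row: "(K *\<^sub>v \<psi> 0) $ i = (\<Sum>j<N. K $$ (i, j) * \<psi> 0 $ j)"
    using i K pCons.prems(1) by (simp add: scalar_prod_def atLeast0LessThan)
  have "(\<Sum>j<N. K $$ (i, j) * poly_shift \<psi> (pCons a q) j)
      = a * (K *\<^sub>v \<psi> 0) $ i + (\<Sum>j<N. K $$ (i, j) * poly_shift ?\<psi>' q j)"
    by (simp add: row poly_shift_pCons distrib_left sum.distrib sum_distrib_left mult_ac)
  also have "\<dots> = poly_shift \<psi> (P * pCons a q) i"
    using pCons.prems(2)[OF i] by (simp add: IH mult_pCons_right poly_shift_add poly_shift_smult poly_shift_pCons)
  finally show ?case .
qed simp

lemma shift_det_mult_char:
  fixes K :: "'a::comm_ring_1 mat"
  assumes K: "K \<in> carrier_mat N N" and dim: "\<And>l. dim_vec (\<psi> l) = N"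
    and K\<psi>: "\<And>l i. i < N \<Longrightarrow> (K *\<^sub>v \<psi> l) $ i = poly_shift (\<lambda>k. \<psi> (l + k)) P i"
  shows "shift_det N \<psi> (\<lambda>j. (P - [:c:]) * B j) = det (K - c \<cdot>\<^sub>m 1\<^sub>m N) * shift_det N \<psi> B"
proof -
  have "shift_mat N \<psi> (\<lambda>j. (P - [:c:]) * B j) = (K - c \<cdot>\<^sub>m 1\<^sub>m N) * shift_mat N \<psi> B"
  proof (rule eq_matI)
    fix i j assume "i < dim_row ((K - c \<cdot>\<^sub>m 1\<^sub>m N) * shift_mat N \<psi> B)"
      and "j < dim_col ((K - c \<cdot>\<^sub>m 1\<^sub>m N) * shift_mat N \<psi> B)"
    then have i: "i < N" and j: "j < N" using K by auto
    have "((K - c \<cdot>\<^sub>m 1\<^sub>m N) * shift_mat N \<psi> B) $$ (i, j)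
        = (\<Sum>k<N. (K $$ (i, k) - c * (if i = k then 1 else 0)) * poly_shift \<psi> (B j) k)"
      using i j K by (simp add: scalar_prod_def atLeast0LessThan shift_mat_def)
    also have "\<dots> = (\<Sum>k<N. K $$ (i, k) * poly_shift \<psi> (B j) k)
        - (\<Sum>k<N. if i = k then c * poly_shift \<psi> (B j) k else 0)"
      by (simp only: left_diff_distrib sum_subtractf) (intro arg_cong2[where f = "(-)"] refl sum.cong, auto)
    also have "\<dots> = (\<Sum>k<N. K $$ (i, k) * poly_shift \<psi> (B j) k) - c * poly_shift \<psi> (B j) i"
      using i by simp
    also have "\<dots> = poly_shift \<psi> ((P - [:c:]) * B j) i"
      using poly_shift_mult_char[OF K i dim K\<psi>]
      by (simp add: left_diff_distrib poly_shift_diff poly_shift_smult mult_pCons_left)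
    finally show "shift_mat N \<psi> (\<lambda>j. (P - [:c:]) * B j) $$ (i, j) = ((K - c \<cdot>\<^sub>m 1\<^sub>m N) * shift_mat N \<psi> B) $$ (i, j)"
      using i j by (simp add: shift_mat_def)
  qed (use K in auto)
  moreover have "K - c \<cdot>\<^sub>m 1\<^sub>m N \<in> carrier_mat N N" using K by auto
  ultimately show ?thesis by (simp add: shift_det_def det_mult[OF _ shift_mat_carrier])
qed

lemma finite_det_minus_scalar_zeros:
  fixes K :: "'a::field mat"
  assumes K: "K \<in> carrier_mat N N"
  shows "finite {c. det (K - c \<cdot>\<^sub>m 1\<^sub>m N) = 0}"
proof -
  have "char_poly K \<noteq> 0"
    using degree_monic_char_poly[OF K] by auto
  moreover have "{c. det (K - c \<cdot>\<^sub>m 1\<^sub>m N) = 0} \<subseteq> {c. poly (char_poly K) c = 0}"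
  proof
    fix c assume "c \<in> {c. det (K - c \<cdot>\<^sub>m 1\<^sub>m N) = 0}"
    moreover have "char_matrix K c = K - c \<cdot>\<^sub>m 1\<^sub>m N"
      unfolding char_matrix_def using K by (intro eq_matI) auto
    ultimately show "c \<in> {c. poly (char_poly K) c = 0}"
      using char_poly_matrix[OF K] det_0_negate[OF char_matrix_closed[OF K]] by simp
  qed
  ultimately show ?thesis using finite_subset poly_roots_finite by blast
qed

lemma affine_eq_0_off_finite:
  fixes a b :: "'a::field_char_0"
  assumes "finite Z" and "\<And>c. c \<notin> Z \<Longrightarrow> a + c * b = 0"
  shows "a = 0" "b = 0"
proof -
  obtain c1 where c1: "c1 \<notin> Z"
    using ex_new_if_finite[OF infinite_UNIV_char_0 assms(1)] by blast
  obtain c2 where c2: "c2 \<notin> insert c1 Z"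
    using ex_new_if_finite[OF infinite_UNIV_char_0] assms(1) by blast
  have "(c1 - c2) * b = (a + c1 * b) - (a + c2 * b)" by (simp add: algebra_simps)
  also have "\<dots> = 0" using assms(2) c1 c2 by simp
  finally show "b = 0" using c2 by auto
  then show "a = 0" using assms(2)[OF c1] by simp
qed

lemma cas_char_scaled_identity:
  fixes K :: "'a::field mat" and S :: "'a set"
  assumes K: "K \<in> carrier_mat N N" and dim: "\<And>l. dim_vec (\<psi> l) = N"
    and K\<psi>: "\<And>l i. i < N \<Longrightarrow> (K *\<^sub>v \<psi> l) $ i = poly_shift (\<lambda>k. \<psi> (l + k)) P i"
    and S: "finite S" "2 \<le> card S" and P: "degree P \<le> card S" "coeff P (card S) = 1"
  shows "det (K - c \<cdot>\<^sub>m 1\<^sub>m N) * (cas_f N \<psi> 1 * cas_g N \<psi> (lin_prod S) - cas_g N \<psi> 1 * cas_f N \<psi> (lin_prod S)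
      + (coeff P (card S - 1) - \<Sum>S) * cas_f N \<psi> 1 * cas_f N \<psi> (lin_prod S)
      - (\<Sum>s\<in>S. (poly P (-s) - c) / poly (lin_prod (S - {s})) (-s)
          * cas_f N \<psi> [:s, 1:] * cas_f N \<psi> (lin_prod (S - {s})))) = 0"
proof -
  define V where "V = lin_prod S"
  define W where "W s = lin_prod (S - {s})" for s
  define \<kappa> where "\<kappa> = det (K - c \<cdot>\<^sub>m 1\<^sub>m N)"
  define lam where "lam s = (poly P (-s) - c) / poly (W s) (-s)" for s
  have S_ne: "S \<noteq> {}" using S by auto
  have u_deg: "degree (P - [:c:]) \<le> card S"
    using P S by (intro degree_diff_le) auto
  have u_coeff: "coeff (P - [:c:]) (card S) = 1" "coeff (P - [:c:]) (card S - 1) = coeff P (card S - 1)"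
    using P S by (auto simp: coeff_pCons split: nat.split)
  have VW: "V = [:s, 1:] * W s" if "s \<in> S" for s
    using lin_prod_remove[OF S(1) that] by (simp add: V_def W_def)
  have u: "P - [:c:] = smult 1 V + (\<Sum>s\<in>S. smult (lam s) (W s))"
    using lagrange_lin_prod[OF S(1) u_deg u_coeff(1)] by (simp add: V_def W_def lam_def)
  have lam_sum: "(\<Sum>s\<in>S. lam s) = coeff P (card S - 1) - \<Sum>S"
    using lagrange_lin_prod_coeff_sum[OF S(1) _ u_deg u_coeff(1)] u_coeff(2) S_ne
    by (simp add: lam_def W_def)
  have scale_f: "cas_f N \<psi> ((P - [:c:]) * F) = \<kappa> * cas_f N \<psi> F" for F
    using shift_det_mult_char[OF K dim K\<psi>, of c "\<lambda>j. F * X ^ j"]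
    by (simp add: cas_f_def \<kappa>_def mult.assoc)
  have scale_g: "cas_g N \<psi> (P - [:c:]) = \<kappa> * cas_g N \<psi> 1"
    using shift_det_mult_char[OF K dim K\<psi>, of c "\<lambda>j. if j = N - 1 then X ^ N else X ^ j"]
    by (simp add: cas_g_def \<kappa>_def if_distrib cong: if_cong)
  have "1 * (\<kappa> * cas_f N \<psi> 1 * cas_g N \<psi> V - \<kappa> * cas_g N \<psi> 1 * cas_f N \<psi> V)
      + (coeff P (card S - 1) - \<Sum>S) * (\<kappa> * cas_f N \<psi> 1) * cas_f N \<psi> V
      - (\<Sum>s\<in>S. lam s * (\<kappa> * cas_f N \<psi> [:s, 1:]) * cas_f N \<psi> (W s)) = 0"
    using cas_bilinear_identity[OF S(1) VW u, of N \<psi>] scale_f[of 1]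
    by (simp only: scale_f scale_f[of 1, unfolded mult_1_right] scale_g lam_sum mult_1_right)
  moreover have "\<kappa> * (\<Sum>s\<in>S. lam s * cas_f N \<psi> [:s, 1:] * cas_f N \<psi> (W s))
      = (\<Sum>s\<in>S. lam s * (\<kappa> * cas_f N \<psi> [:s, 1:]) * cas_f N \<psi> (W s))"
    by (simp add: sum_distrib_left mult_ac)
  ultimately show ?thesis
    by (simp add: V_def W_def lam_def \<kappa>_def algebra_simps flip: V_def W_def lam_def)
qed

(* cas_bilinear_identity for u = P - c carries the factor det (K - c); what remains is affine in c
   and vanishes off the finitely many eigenvalues of K, hence identically, and c = P(-s0) kills the
   s0 term. *)

lemma cas_char_identity:
  fixes K :: "'a::field_char_0 mat" and S :: "'a set"
  assumes K: "K \<in> carrier_mat N N" and dim: "\<And>l. dim_vec (\<psi> l) = N"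
    and K\<psi>: "\<And>l i. i < N \<Longrightarrow> (K *\<^sub>v \<psi> l) $ i = poly_shift (\<lambda>k. \<psi> (l + k)) P i"
    and S: "finite S" "2 \<le> card S" and P: "degree P \<le> card S" "coeff P (card S) = 1"
    and s0: "s0 \<in> S"
  shows "cas_f N \<psi> 1 * cas_g N \<psi> (lin_prod S) - cas_g N \<psi> 1 * cas_f N \<psi> (lin_prod S)
      + (coeff P (card S - 1) - \<Sum>S) * cas_f N \<psi> 1 * cas_f N \<psi> (lin_prod S)
      - (\<Sum>s\<in>S. (poly P (-s) - poly P (-s0)) / poly (lin_prod (S - {s})) (-s)
          * cas_f N \<psi> [:s, 1:] * cas_f N \<psi> (lin_prod (S - {s}))) = 0"
proof -
  define E where "E = cas_f N \<psi> 1 * cas_g N \<psi> (lin_prod S) - cas_g N \<psi> 1 * cas_f N \<psi> (lin_prod S)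
      + (coeff P (card S - 1) - \<Sum>S) * cas_f N \<psi> 1 * cas_f N \<psi> (lin_prod S)"
  define A where "A s = cas_f N \<psi> [:s, 1:] * cas_f N \<psi> (lin_prod (S - {s}))" for s
  define D where "D s = poly (lin_prod (S - {s})) (-s)" for s
  define Br where "Br c = E - (\<Sum>s\<in>S. (poly P (-s) - c) / D s * A s)" for c
  have scaled: "det (K - c \<cdot>\<^sub>m 1\<^sub>m N) * Br c = 0" for c
    using cas_char_scaled_identity[OF K dim K\<psi> S P, of c]
    by (simp add: Br_def E_def A_def D_def mult.assoc)
  have affine: "Br c = Br 0 + c * (\<Sum>s\<in>S. A s / D s)" for c
  proof -
    have "(poly P (-s) - c) / D s * A s = poly P (-s) / D s * A s - c * (A s / D s)" for s
      by (simp add: diff_divide_distrib algebra_simps)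
    then show ?thesis by (simp add: Br_def sum_subtractf sum_distrib_left)
  qed
  have "Br 0 + c * (\<Sum>s\<in>S. A s / D s) = 0" if "c \<notin> {c. det (K - c \<cdot>\<^sub>m 1\<^sub>m N) = 0}" for c
    using scaled[of c] affine[of c] that by simp
  from affine_eq_0_off_finite[OF finite_det_minus_scalar_zeros[OF K] this]
  have "Br (poly P (-s0)) = 0"
    using affine[of "poly P (-s0)"] by simp
  then show ?thesis
    by (simp only: Br_def E_def A_def D_def mult.assoc)
qed

lemma poly_char_diff:
  "poly [:0, -e3, e2, -e1, 1:] (-x) - poly [:0, -e3, e2, -e1, 1:] (-y) = (x - y) * Rpoly e1 e2 e3 x y"
  unfolding Rpoly_def by (simp add: algebra_simps power2_eq_square)

lemma char_diff_quotient:
  assumes "x \<noteq> y"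
  shows "(poly [:0, -e3, e2, -e1, 1:] (-x) - poly [:0, -e3, e2, -e1, 1:] (-y)) / (D * (y - x))
    = - (Rpoly e1 e2 e3 x y / D)"
  unfolding poly_char_diff using assms by (cases "D = 0") (auto simp: field_simps)

lemma cas_char_identity_4:
  fixes K :: "complex mat" and \<psi> :: "nat \<Rightarrow> complex vec"
  assumes K: "K \<in> carrier_mat N N" and dim: "\<And>l. dim_vec (\<psi> l) = N"
    and K\<psi>: "\<And>l i. i < N \<Longrightarrow> (K *\<^sub>v \<psi> l) $ i = poly_shift (\<lambda>k. \<psi> (l + k)) [:0, -e3, e2, -e1, 1:] i"
    and d: "distinct [s1, s2, s3, s4]"
  shows "(s3 * cas_f N \<psi> 1 + cas_g N \<psi> 1) * cas_f N \<psi> ([:s1, 1:] * [:s2, 1:] * [:s3, 1:] * [:s4, 1:])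
      - cas_f N \<psi> 1 * (cas_g N \<psi> ([:s1, 1:] * [:s2, 1:] * [:s3, 1:] * [:s4, 1:])
        - s4 * cas_f N \<psi> ([:s1, 1:] * [:s2, 1:] * [:s3, 1:] * [:s4, 1:]))
      - Rpoly e1 e2 e3 s1 s4 / ((s1 - s2) * (s1 - s3))
        * cas_f N \<psi> ([:s2, 1:] * [:s3, 1:] * [:s4, 1:]) * cas_f N \<psi> [:s1, 1:]
      + Rpoly e1 e2 e3 s2 s4 / ((s1 - s2) * (s2 - s3))
        * cas_f N \<psi> ([:s1, 1:] * [:s3, 1:] * [:s4, 1:]) * cas_f N \<psi> [:s2, 1:]
      + (s1 + s2 + e1) * cas_f N \<psi> 1 * cas_f N \<psi> ([:s1, 1:] * [:s2, 1:] * [:s3, 1:] * [:s4, 1:])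
      - Rpoly e1 e2 e3 s3 s4 / ((s1 - s3) * (s2 - s3))
        * cas_f N \<psi> [:s3, 1:] * cas_f N \<psi> ([:s1, 1:] * [:s2, 1:] * [:s4, 1:]) = 0"
proof -
  let ?P = "[:0, -e3, e2, -e1, 1:]" and ?S = "{s1, s2, s3, s4}"
  have hyps: "finite ?S" "2 \<le> card ?S" "degree ?P \<le> card ?S" "coeff ?P (card ?S) = 1" "s4 \<in> ?S"
    using d by (simp_all add: numeral_eq_Suc)
  have sum4: "(\<Sum>s\<in>?S. h s) = h s1 + h s2 + h s3 + h s4" for h :: "complex \<Rightarrow> complex"
    using d by (simp add: add.assoc)
  have "?S - {s1} = {s2, s3, s4}" "?S - {s2} = {s1, s3, s4}" "?S - {s3} = {s1, s2, s4}"
    using d by auto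
  have W: "lin_prod ?S = [:s1, 1:] * [:s2, 1:] * [:s3, 1:] * [:s4, 1:]"
    "lin_prod (?S - {s1}) = [:s2, 1:] * [:s3, 1:] * [:s4, 1:]"
    "lin_prod (?S - {s2}) = [:s1, 1:] * [:s3, 1:] * [:s4, 1:]"
    "lin_prod (?S - {s3}) = [:s1, 1:] * [:s2, 1:] * [:s4, 1:]"
    using d \<open>?S - {s1} = {s2, s3, s4}\<close> \<open>?S - {s2} = {s1, s3, s4}\<close> \<open>?S - {s3} = {s1, s2, s4}\<close>
    by (simp_all add: lin_prod_def mult_ac)
  have neq: "s1 \<noteq> s4" "s2 \<noteq> s4" "s3 \<noteq> s4" using d by auto
  have poly_W: "poly ([:s2, 1:] * [:s3, 1:] * [:s4, 1:]) (-s1) = ((s1 - s2) * (s1 - s3)) * (s4 - s1)"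
    "poly ([:s1, 1:] * [:s3, 1:] * [:s4, 1:]) (-s2) = - ((s1 - s2) * (s2 - s3)) * (s4 - s2)"
    "poly ([:s1, 1:] * [:s2, 1:] * [:s4, 1:]) (-s3) = ((s1 - s3) * (s2 - s3)) * (s4 - s3)"
    by (simp_all add: algebra_simps)
  have q: "(poly ?P (-s1) - poly ?P (-s4)) / poly ([:s2, 1:] * [:s3, 1:] * [:s4, 1:]) (-s1)
      = - (Rpoly e1 e2 e3 s1 s4 / ((s1 - s2) * (s1 - s3)))"
    "(poly ?P (-s2) - poly ?P (-s4)) / poly ([:s1, 1:] * [:s3, 1:] * [:s4, 1:]) (-s2)
      = Rpoly e1 e2 e3 s2 s4 / ((s1 - s2) * (s2 - s3))"
    "(poly ?P (-s3) - poly ?P (-s4)) / poly ([:s1, 1:] * [:s2, 1:] * [:s4, 1:]) (-s3)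
      = - (Rpoly e1 e2 e3 s3 s4 / ((s1 - s3) * (s2 - s3)))"
    using neq by (simp_all only: poly_W char_diff_quotient minus_divide_right[symmetric] minus_minus simp_thms)
  have "coeff ?P (card ?S - 1) = - e1"
    using d by (simp add: numeral_eq_Suc)
  with cas_char_identity[OF K dim K\<psi> hyps]
  have inst: "cas_f N \<psi> 1 * cas_g N \<psi> ([:s1, 1:] * [:s2, 1:] * [:s3, 1:] * [:s4, 1:])
      - cas_g N \<psi> 1 * cas_f N \<psi> ([:s1, 1:] * [:s2, 1:] * [:s3, 1:] * [:s4, 1:])
      + (- e1 - (s1 + s2 + s3 + s4)) * cas_f N \<psi> 1 * cas_f N \<psi> ([:s1, 1:] * [:s2, 1:] * [:s3, 1:] * [:s4, 1:])
      - (- (Rpoly e1 e2 e3 s1 s4 / ((s1 - s2) * (s1 - s3)))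
          * cas_f N \<psi> [:s1, 1:] * cas_f N \<psi> ([:s2, 1:] * [:s3, 1:] * [:s4, 1:])
        + Rpoly e1 e2 e3 s2 s4 / ((s1 - s2) * (s2 - s3))
          * cas_f N \<psi> [:s2, 1:] * cas_f N \<psi> ([:s1, 1:] * [:s3, 1:] * [:s4, 1:])
        + - (Rpoly e1 e2 e3 s3 s4 / ((s1 - s3) * (s2 - s3)))
          * cas_f N \<psi> [:s3, 1:] * cas_f N \<psi> ([:s1, 1:] * [:s2, 1:] * [:s4, 1:])
        + 0) = 0"
    by (simp only: sum4 W q diff_self div_0 mult_zero_left)
  have neg: "\<And>x y :: complex. x = 0 \<Longrightarrow> y = - x \<Longrightarrow> y = 0" by simp
  show ?thesis
    by (rule neg[OF inst]) (simp add: algebra_simps)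
qed

lemma poly_shift_direction:
  fixes \<Phi> :: "int \<Rightarrow> int \<Rightarrow> 'a::comm_ring_1 vec"
  assumes dim: "\<And>x l. dim_vec (\<Phi> x l) = N"
    and step: "\<And>x l. s \<cdot>\<^sub>v \<Phi> (x - 1) l = \<Phi> x l - \<Phi> (x - 1) (l + 1)"
    and base: "\<And>l i. i < N \<Longrightarrow> \<Phi> x0 (int l) $ i = poly_shift \<psi> (F * X ^ l) i"
  shows "i < N \<Longrightarrow> \<Phi> (x0 + int j) (int l) $ i = poly_shift \<psi> (F * [:s, 1:] ^ j * X ^ l) i"
proof (induction j arbitrary: l)
  case (Suc j)
  let ?x = "x0 + int j"
  have "(s \<cdot>\<^sub>v \<Phi> ?x (int l)) $ i = (\<Phi> (?x + 1) (int l) - \<Phi> ?x (int l + 1)) $ i"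
    using step[of "?x + 1" "int l"] by simp
  then have "\<Phi> (x0 + int (Suc j)) (int l) $ i = s * \<Phi> ?x (int l) $ i + \<Phi> ?x (int (Suc l)) $ i"
    using Suc.prems dim by (simp add: algebra_simps)
  moreover have "F * [:s, 1:] ^ Suc j * X ^ l = smult s (F * [:s, 1:] ^ j * X ^ l) + F * [:s, 1:] ^ j * X ^ Suc l"
    using linear_factor_mult[of s "F * [:s, 1:] ^ j * X ^ l"] by (simp add: mult_ac)
  ultimately show ?case
    using Suc.IH[of l] Suc.IH[of "Suc l"] Suc.prems by (simp add: poly_shift_add poly_shift_smult)
qed (use base in simp)

context
  fixes \<phi> :: "int \<Rightarrow> int \<Rightarrow> int \<Rightarrow> int \<Rightarrow> int \<Rightarrow> complex vec" and N :: nat and sn sm sa sb :: complex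
  assumes dim: "\<And>n m al be l. dim_vec (\<phi> n m al be l) = N"
    and cn: "\<And>n m al be l. sn \<cdot>\<^sub>v \<phi> (n - 1) m al be l = \<phi> n m al be l - \<phi> (n - 1) m al be (l + 1)"
    and cm: "\<And>n m al be l. sm \<cdot>\<^sub>v \<phi> n (m - 1) al be l = \<phi> n m al be l - \<phi> n (m - 1) al be (l + 1)"
    and ca: "\<And>n m al be l. sa \<cdot>\<^sub>v \<phi> n m (al - 1) be l = \<phi> n m al be l - \<phi> n m (al - 1) be (l + 1)"
    and cb: "\<And>n m al be l. sb \<cdot>\<^sub>v \<phi> n m al (be - 1) l = \<phi> n m al be l - \<phi> n m al (be - 1) (l + 1)"
begin

lemma lattice_poly_shift:
  assumes "i < N"
  shows "\<phi> (n + int i1) (m + int i2) (al + int i3) (be + int i4) (int l) $ i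
    = poly_shift (\<lambda>k. \<phi> n m al be (int k)) ([:sn, 1:] ^ i1 * [:sm, 1:] ^ i2 * [:sa, 1:] ^ i3 * [:sb, 1:] ^ i4 * X ^ l) i"
proof -
  let ?\<psi> = "\<lambda>k. \<phi> n m al be (int k)"
  have 1: "\<phi> (n + int i1) m al be (int l) $ i = poly_shift ?\<psi> (1 * [:sn, 1:] ^ i1 * X ^ l) i" if "i < N" for l i
    by (rule poly_shift_direction[where \<Phi> = "\<lambda>x. \<phi> x m al be"]) (use dim cn that in \<open>simp_all add: poly_shift_X_power\<close>)
  have 2: "\<phi> (n + int i1) (m + int i2) al be (int l) $ i
      = poly_shift ?\<psi> (1 * [:sn, 1:] ^ i1 * [:sm, 1:] ^ i2 * X ^ l) i" if "i < N" for l i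
    by (rule poly_shift_direction[where \<Phi> = "\<lambda>x. \<phi> (n + int i1) x al be"]) (use dim cm 1 that in simp_all)
  have 3: "\<phi> (n + int i1) (m + int i2) (al + int i3) be (int l) $ i
      = poly_shift ?\<psi> (1 * [:sn, 1:] ^ i1 * [:sm, 1:] ^ i2 * [:sa, 1:] ^ i3 * X ^ l) i" if "i < N" for l i
    by (rule poly_shift_direction[where \<Phi> = "\<lambda>x. \<phi> (n + int i1) (m + int i2) x be"]) (use dim ca 2 that in simp_all)
  have 4: "\<phi> (n + int i1) (m + int i2) (al + int i3) (be + int i4) (int l) $ i
      = poly_shift ?\<psi> (1 * [:sn, 1:] ^ i1 * [:sm, 1:] ^ i2 * [:sa, 1:] ^ i3 * [:sb, 1:] ^ i4 * X ^ l) i"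
    by (rule poly_shift_direction[where \<Phi> = "\<lambda>x. \<phi> (n + int i1) (m + int i2) (al + int i3) x"])
      (use dim cb 3 assms in simp_all)
  then show ?thesis by simp
qed


lemma fC_lattice:
  assumes "n \<le> n'" "m \<le> m'" "al \<le> al'" "be \<le> be'"
  shows "fC N \<phi> n' m' al' be' = cas_f N (\<lambda>k. \<phi> n m al be (int k))
    ([:sn, 1:] ^ nat (n' - n) * [:sm, 1:] ^ nat (m' - m) * [:sa, 1:] ^ nat (al' - al) * [:sb, 1:] ^ nat (be' - be))"
proof -
  from assms obtain i1 i2 i3 i4 where "n' = n + int i1" "m' = m + int i2" "al' = al + int i3" "be' = be + int i4"
    by (metis zle_iff_zadd)
  then show ?thesis
    unfolding fC_def casoratian_def cas_f_def shift_det_def shift_mat_def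
    by (intro arg_cong[where f = det] eq_matI) (auto simp: lattice_poly_shift)
qed

lemma gC_lattice:
  assumes "n \<le> n'" "m \<le> m'" "al \<le> al'" "be \<le> be'"
  shows "gC N \<phi> n' m' al' be' = cas_g N (\<lambda>k. \<phi> n m al be (int k))
    ([:sn, 1:] ^ nat (n' - n) * [:sm, 1:] ^ nat (m' - m) * [:sa, 1:] ^ nat (al' - al) * [:sb, 1:] ^ nat (be' - be))"
proof -
  from assms obtain i1 i2 i3 i4 where "n' = n + int i1" "m' = m + int i2" "al' = al + int i3" "be' = be + int i4"
    by (metis zle_iff_zadd)
  then show ?thesis
    unfolding gC_def casoratian_def cas_g_def shift_det_def shift_mat_def
    by (intro arg_cong[where f = det] eq_matI) (auto simp: lattice_poly_shift)
qed

end

theorem theorem5p2: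
  fixes a1 a2 a3 \<delta> p q a b :: complex
    and N :: nat
    and \<phi> :: "int \<Rightarrow> int \<Rightarrow> int \<Rightarrow> int \<Rightarrow> int \<Rightarrow> complex vec"
    and K :: "complex mat"
    and n m al be :: int
  defines "s1 \<equiv> p - \<delta>" and "s2 \<equiv> q - \<delta>" and "s3 \<equiv> a - \<delta>" and "s4 \<equiv> b - \<delta>"
    and "e1 \<equiv> eps1 \<delta> a3" and "e2 \<equiv> eps2 \<delta> a2 a3" and "e3 \<equiv> eps3 \<delta> a1 a2 a3"
    and "R \<equiv> Rpoly (eps1 \<delta> a3) (eps2 \<delta> a2 a3) (eps3 \<delta> a1 a2 a3)"
    and "f \<equiv> fC N \<phi>" and "g \<equiv> gC N \<phi>"
  assumes dist: "distinct [p, q, a, b]"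
    and N1: "N \<ge> 1"
    and Kc: "K \<in> carrier_mat N N"
    and dim: "\<And>n m al be l. dim_vec (\<phi> n m al be l) = N"
    and cn: "\<And>n m al be l. s1 \<cdot>\<^sub>v \<phi> (n-1) m al be l = \<phi> n m al be l - \<phi> (n-1) m al be (l+1)"
    and cm: "\<And>n m al be l. s2 \<cdot>\<^sub>v \<phi> n (m-1) al be l = \<phi> n m al be l - \<phi> n (m-1) al be (l+1)"
    and ca: "\<And>n m al be l. s3 \<cdot>\<^sub>v \<phi> n m (al-1) be l = \<phi> n m al be l - \<phi> n m (al-1) be (l+1)"
    and cb: "\<And>n m al be l. s4 \<cdot>\<^sub>v \<phi> n m al (be-1) l = \<phi> n m al be l - \<phi> n m al (be-1) (l+1)"
    and cK: "\<And>n m al be l. K *\<^sub>v \<phi> n m al be l =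
               \<phi> n m al be (l+4) - e1 \<cdot>\<^sub>v \<phi> n m al be (l+3) + e2 \<cdot>\<^sub>v \<phi> n m al be (l+2)
               - e3 \<cdot>\<^sub>v \<phi> n m al be (l+1)"
  shows
   "(s1-s3) * f (n+1) m al be * f n m (al-1) (be+1) - (s1-s4) * f n m al be * f (n+1) m (al-1) (be+1)
      + (s3-s4) * f n m al (be+1) * f (n+1) m (al-1) be = 0
  \<and> (s2-s3) * f n (m+1) al be * f n m (al-1) (be+1) - (s2-s4) * f n m al be * f n (m+1) (al-1) (be+1)
      + (s3-s4) * f n m al (be+1) * f n (m+1) (al-1) be = 0
  \<and> f n m al be * (s3 * f (n+1) m (al-1) be + g (n+1) m (al-1) be)
      + (s1-s3) * f (n+1) m al be * f n m (al-1) be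
      - (s1 * f n m al be + g n m al be) * f (n+1) m (al-1) be = 0
  \<and> f n m al be * (s3 * f n (m+1) (al-1) be + g n (m+1) (al-1) be)
      + (s2-s3) * f n (m+1) al be * f n m (al-1) be
      - (s2 * f n m al be + g n m al be) * f n (m+1) (al-1) be = 0
  \<and> f (n+1) m al be * (s1 * f n m al (be+1) + g n m al (be+1))
      - (s1-s4) * f n m al be * f (n+1) m al (be+1)
      - (s4 * f (n+1) m al be + g (n+1) m al be) * f n m al (be+1) = 0
  \<and> f n (m+1) al be * (s2 * f n m al (be+1) + g n m al (be+1))
      - (s2-s4) * f n m al be * f n (m+1) al (be+1)
      - (s4 * f n (m+1) al be + g n (m+1) al be) * f n m al (be+1) = 0
  \<and> (s1-s4) * f (n+1) m al (be+1) * f n (m+1) al be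
      - (s2-s4) * f n (m+1) al (be+1) * f (n+1) m al be
      - (s1-s2) * f (n+1) (m+1) al be * f n m al (be+1) = 0
  \<and> (s3 * f n m (al-1) be + g n m (al-1) be) * f (n+1) (m+1) al (be+1)
      - f n m (al-1) be * (g (n+1) (m+1) al (be+1) - s4 * f (n+1) (m+1) al (be+1))
      - R s1 s4 / ((s1-s2) * (s1-s3)) * f n (m+1) al (be+1) * f (n+1) m (al-1) be
      + R s2 s4 / ((s1-s2) * (s2-s3)) * f (n+1) m al (be+1) * f n (m+1) (al-1) be
      + (s1 + s2 + e1) * f n m (al-1) be * f (n+1) (m+1) al (be+1)
      - R s3 s4 / ((s1-s3) * (s2-s3)) * f n m al be * f (n+1) (m+1) (al-1) (be+1) = 0"
proof -
  let ?\<psi> = "\<lambda>k. \<phi> n m (al - 1) be (int k)"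
  note f = fC_lattice[where \<phi> = \<phi> and N = N and sn = s1 and sm = s2 and sa = s3 and sb = s4
      and n = n and m = m and al = "al - 1" and be = be, OF dim cn cm ca cb, folded f_def]
  note g = gC_lattice[where \<phi> = \<phi> and N = N and sn = s1 and sm = s2 and sa = s3 and sb = s4
      and n = n and m = m and al = "al - 1" and be = be, OF dim cn cm ca cb, folded g_def]
  have K\<psi>: "(K *\<^sub>v ?\<psi> l) $ i = poly_shift (\<lambda>k. ?\<psi> (l + k)) [:0, -e3, e2, -e1, 1:] i" if "i < N" for l i
    using cK[of n m "al - 1" be "int l"] that dim Kc
    by (simp add: poly_shift_pCons algebra_simps numeral_eq_Suc)
  have d: "distinct [s1, s2, s3, s4]"
    using dist by (auto simp: s1_def s2_def s3_def s4_def)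
  have R: "R = Rpoly e1 e2 e3"
    by (simp add: R_def e1_def e2_def e3_def)
  show ?thesis
    unfolding R
    apply (intro conjI)
    subgoal by (rule trans[OF _ cas_hirota_miwa[where a = s4 and b = s1 and c = s3 and H = 1 and N = N and \<psi> = ?\<psi>]])
        (simp add: f algebra_simps)
    subgoal by (rule trans[OF _ cas_hirota_miwa[where a = s4 and b = s2 and c = s3 and H = 1 and N = N and \<psi> = ?\<psi>]])
        (simp add: f algebra_simps)
    subgoal by (rule trans[OF _ cas_f_g_identity[where a = s3 and c = s1 and H = 1 and N = N and \<psi> = ?\<psi>]])
        (simp add: f g algebra_simps)
    subgoal by (rule trans[OF _ cas_f_g_identity[where a = s3 and c = s2 and H = 1 and N = N and \<psi> = ?\<psi>]])
        (simp add: f g algebra_simps)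
    subgoal by (rule trans[OF _ cas_f_g_identity[where a = s1 and c = s4 and H = "[:s3, 1:]" and N = N and \<psi> = ?\<psi>]])
        (simp add: f g algebra_simps)
    subgoal by (rule trans[OF _ cas_f_g_identity[where a = s2 and c = s4 and H = "[:s3, 1:]" and N = N and \<psi> = ?\<psi>]])
        (simp add: f g algebra_simps)
    subgoal by (rule trans[OF _ cas_hirota_miwa[where a = s2 and b = s1 and c = s4 and H = "[:s3, 1:]" and N = N and \<psi> = ?\<psi>]])
        (simp add: f algebra_simps)
    subgoal by (rule trans[OF _ cas_char_identity_4[OF Kc _ K\<psi> d]]) (simp_all add: f g dim algebra_simps)
    done
qed

end
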